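(* In any history sequence of the Lazy Set algorithm, every state is normal (i.e. satisfies NS1–NS5 of the context).
   Context: Lazy Set algorithm. A fixed countably infinite set $A$ of addresses contains distinguished $\mathsf H,\mathsf T$. A state $S$ consists of: predicates $\mathrm{Active}^S,\mathrm{Marked}^S\subseteq A$; functions $\mathrm{Next}^S:A\to A\cup\{\bot\}$, $\mathrm{Val}^S:A\to\mathbb N\cup\{-1,\infty,\bot\}$, $\mathrm{LockedTo}^S:A\to\{\text{processes}\}\cup\{\bot\}$; for each process $P$ local variables $\mathrm{pred}_P,\mathrm{curr}_P,d_P\in A$, $x_P\in\mathbb N$, and a program counter $PC_P$. Code of process $P$ (line numbers are the $PC$ values): line 0: pick $x\in\mathbb N$ and go to 1.1, 2.1 or 3.1. Success condition $SC\equiv\neg\mathrm{Marked}(\mathrm{pred})\wedge\mathrm{Next}(\mathrm{pred})=\mathrm{curr}$. Procedure locate$(x)$, lines L1: $\mathrm{curr}:=\mathsf H$; L2: repeat; L3.1: $\mathrm{pred}:=\mathrm{curr}$; L3.2: $\mathrm{curr}:=\mathrm{Next}(\mathrm{curr})$; L4: until $\mathrm{Val}(\mathrm{curr})\ge x$; L5: return $(\mathrm{pred},\mathrm{curr})$ to the caller. ADD$(x)$: 1.1 $(\mathrm{pred},\mathrm{curr}):=$locate$(x)$; 1.2 lock pred; 1.3 if $\neg SC$ then unlock pred and return $f$; 1.4 if $\mathrm{Val}(\mathrm{curr})=x$ then unlock pred and return $1$; 1.5 activation: choose $a\notin\mathrm{Active}$, make it active with $\mathrm{Val}(a)=x$,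 $\mathrm{Next}(a)=\mathrm{curr}$, and set $\mathrm{Next}(\mathrm{pred}):=a$ (nothing else changes); 1.6 unlock pred, return $0$. REMOVE$(x)$: 2.1 $(\mathrm{pred},\mathrm{curr}):=$locate$(x)$; 2.2 lock pred; 2.3 if $\neg SC$ then unlock pred, return $f$; 2.4 if $\mathrm{Val}(\mathrm{curr})>x$ then unlock pred, return $0$; 2.5 lock curr, $d:=\mathrm{Next}(\mathrm{curr})$; 2.6 $\mathrm{Marked}(\mathrm{curr}):=$ true; 2.7 $\mathrm{Next}(\mathrm{pred}):=d$ (physical removal); 2.8 unlock curr and pred, return $1$. CONTAINS$(x)$: 3.1 $\mathrm{curr}:=\mathsf H$; 3.2 repeat; 3.3 $\mathrm{curr}:=\mathrm{Next}(\mathrm{curr})$; 3.4 until $\mathrm{Val}(\mathrm{curr})\ge x$; 3.5 return $1$ if $\mathrm{Val}(\mathrm{curr})=x$ else $0$. Returns set $PC_P:=0$. Each line is executed as an atomic step; a lock of address $a$ by $P$ is enabled only if $\mathrm{LockedTo}(a)=\bot$ and sets $\mathrm{LockedTo}(a)=P$; unlock sets it to $\bot$; the test at 1.3/2.3 reads $\mathrm{Marked}(\mathrm{pred})$ and $\mathrm{Next}(\mathrm{pred})$. Initial state: $\mathrm{Active}=\{\mathsf H,\mathsf T\}$, $\mathrm{Marked}=\emptyset$, $\mathrm{Next}(\mathsf H)=\mathsf T$, $\mathrm{Next}(\mathsf T)=\bot$, $\mathrm{Next}(a)=a$ otherwise, $\mathrm{Val}(\mathsf H)=-1$, $\mathrm{Val}(\mathsf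 T)=\infty$, $\mathrm{Val}=\bot$ otherwise, all unlocked, $\mathrm{pred}_P=\mathsf H$, $\mathrm{curr}_P=\mathsf T$, $PC_P=0$. A history sequence is $(S_0,e_0,S_1,\dots)$ with $S_0$ initial and each $(S_i,e_i,S_{i+1})$ a step of some process. A path is a sequence of distinct addresses $a_1,\dots,a_n$, $n>1$, with $a_i\ne\mathsf T$ and $\mathrm{Next}(a_i)=a_{i+1}$ for $i<n$; the main branch is the path from $\mathsf H$ to $\mathsf T$. $S$ is normal if for every process $P$ (writing pred, curr, $x$ for $\mathrm{pred}_P,\mathrm{curr}_P,x_P$): NS1: $\mathsf H,\mathsf T$ are active with $\mathrm{Val}(\mathsf H)=-1$, $\mathrm{Val}(\mathsf T)=\infty$; every active $a\notin\{\mathsf H,\mathsf T\}$ has $\mathrm{Val}(a)\in\mathbb N$; for active $a\ne\mathsf T$, $\mathrm{Next}(a)$ is active and $\mathrm{Val}(a)<\mathrm{Val}(\mathrm{Next}(a))$; pred and curr are active; there are finitely many active addresses; and the relation "there is a path from $a$ to $b$" on active addresses has no loops (a tree with root $\mathsf T$). NS2: $a$ is active iff $a$ is on the main branch or $\mathrm{Marked}(a)$. NS3: if $PC_P\in\{L2,L3.1\}$ then $\mathrm{Val}(\mathrm{curr})<x$; if $PC_P=L3.2$ then $\mathrm{pred}=\mathrm{curr}$ and $\mathrm{Val}(\mathrm{pred})<x$; if $PC_P=L4$ then $\mathrm{Val}(\mathrm{pred})<\mathrm{Val}(\mathrm{curr})$ and $\mathrm{Val}(\mathrm{pred})<x$;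 if $PC_P=L5$ then $\mathrm{Val}(\mathrm{pred})<x\le\mathrm{Val}(\mathrm{curr})$. NS4: if $PC_P\in\{1.2,1.3,1.4\}$ then $\mathrm{Val}(\mathrm{pred})<x\le\mathrm{Val}(\mathrm{curr})$; if $PC_P=1.5$ then $\mathrm{Val}(\mathrm{pred})<x<\mathrm{Val}(\mathrm{curr})$; if $PC_P\in\{1.3,\dots,1.6\}$ then $\mathrm{LockedTo}(\mathrm{pred})=P$; if $PC_P\in\{1.4,1.5\}$ then pred is unmarked and $\mathrm{Next}(\mathrm{pred})=\mathrm{curr}$. NS5: if $PC_P\in\{2.2,2.3,2.4\}$ then $\mathrm{Val}(\mathrm{pred})<x\le\mathrm{Val}(\mathrm{curr})$; if $PC_P\in\{2.5,\dots,2.8\}$ then $\mathrm{Val}(\mathrm{pred})<x=\mathrm{Val}(\mathrm{curr})$; if $PC_P\in\{2.3,\dots,2.8\}$ then $\mathrm{LockedTo}(\mathrm{pred})=P$, and if $PC_P\in\{2.6,2.7,2.8\}$ then $\mathrm{LockedTo}(\mathrm{curr})=P$; if $PC_P\in\{2.4,\dots,2.8\}$ then pred is unmarked, and if $PC_P\in\{2.4,\dots,2.7\}$ then $\mathrm{Next}(\mathrm{pred})=\mathrm{curr}$; if $PC_P=2.7$ then $\mathrm{Marked}(\mathrm{curr})$. *)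

theory Defs
  imports Main "HOL-Library.Countable_Set"
begin

datatype val = MinusOne | Fin nat | Infty | Undef

fun vless :: "val \<Rightarrow> val \<Rightarrow> bool" where
  "vless MinusOne (Fin _) = True"
| "vless MinusOne Infty = True"
| "vless (Fin m) (Fin n) = (m < n)"
| "vless (Fin _) Infty = True"
| "vless _ _ = False"

definition vle :: "val \<Rightarrow> val \<Rightarrow> bool" where
  "vle u v \<longleftrightarrow> vless u v \<or> (u = v \<and> u \<noteq> Undef)"

text \<open>locate is called from ADD (line 1.1) or REMOVE (line 2.1); the locate lines carry
  the caller so that line L5 returns to 1.2 resp. 2.2.\<close>

datatype caller = CAdd | CRem

datatype pc = PC0
  | PC1_1 | PC1_2 | PC1_3 | PC1_4 | PC1_5 | PC1_6
  | PC2_1 | PC2_2 | PC2_3 | PC2_4 | PC2_5 | PC2_6 | PC2_7 | PC2_8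
  | PC3_1 | PC3_2 | PC3_3 | PC3_4 | PC3_5
  | PL1 caller | PL2 caller | PL31 caller | PL32 caller | PL4 caller | PL5 caller

record ('a, 'p) state =
  Act   :: "'a set"
  Mk    :: "'a set"
  Nxt   :: "'a \<Rightarrow> 'a option"
  Vl    :: "'a \<Rightarrow> val"
  Lck   :: "'a \<Rightarrow> 'p option"
  predv :: "'p \<Rightarrow> 'a"
  currv :: "'p \<Rightarrow> 'a"
  dv    :: "'p \<Rightarrow> 'a"
  xv    :: "'p \<Rightarrow> nat"
  pcv   :: "'p \<Rightarrow> pc"

definition setpc :: "'p \<Rightarrow> pc \<Rightarrow> ('a, 'p) state \<Rightarrow> ('a, 'p) state" where
  "setpc P l S = S\<lparr>pcv := (pcv S)(P := l)\<rparr>"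

definition SC :: "('a, 'p) state \<Rightarrow> 'p \<Rightarrow> bool" where
  "SC S P \<longleftrightarrow> predv S P \<notin> Mk S \<and> Nxt S (predv S P) = Some (currv S P)"

section \<open>Steps of the algorithm (each line one atomic step of process P)\<close>

definition step :: "'a \<Rightarrow> ('a, 'p) state \<Rightarrow> 'p \<Rightarrow> ('a, 'p) state \<Rightarrow> bool" where
  "step H S P S' \<longleftrightarrow>
    (let p = predv S P; c = currv S P; X = Fin (xv S P) in
     case pcv S P of
       PC0 \<Rightarrow> (\<exists>n l. l \<in> {PC1_1, PC2_1, PC3_1} \<and> S' = setpc P l (S\<lparr>xv := (xv S)(P := n)\<rparr>))
     | PL1 cl \<Rightarrow> S' = setpc P (PL2 cl) (S\<lparr>currv := (currv S)(P := H)\<rparr>)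
     | PL2 cl \<Rightarrow> S' = setpc P (PL31 cl) S
     | PL31 cl \<Rightarrow> S' = setpc P (PL32 cl) (S\<lparr>predv := (predv S)(P := c)\<rparr>)
     | PL32 cl \<Rightarrow> (\<exists>b. Nxt S c = Some b \<and> S' = setpc P (PL4 cl) (S\<lparr>currv := (currv S)(P := b)\<rparr>))
     | PL4 cl \<Rightarrow> S' = setpc P (if vle X (Vl S c) then PL5 cl else PL2 cl) S
     | PL5 cl \<Rightarrow> S' = setpc P (case cl of CAdd \<Rightarrow> PC1_2 | CRem \<Rightarrow> PC2_2) S
     | PC1_1 \<Rightarrow> S' = setpc P (PL1 CAdd) S
     | PC1_2 \<Rightarrow> Lck S p = None \<and> S' = setpc P PC1_3 (S\<lparr>Lck := (Lck S)(p := Some P)\<rparr>)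
     | PC1_3 \<Rightarrow> (if SC S P then S' = setpc P PC1_4 S
                 else S' = setpc P PC0 (S\<lparr>Lck := (Lck S)(p := None)\<rparr>))
     | PC1_4 \<Rightarrow> (if Vl S c = X then S' = setpc P PC0 (S\<lparr>Lck := (Lck S)(p := None)\<rparr>)
                 else S' = setpc P PC1_5 S)
     | PC1_5 \<Rightarrow> (\<exists>a. a \<notin> Act S \<and>
                 S' = setpc P PC1_6 (S\<lparr>Act := insert a (Act S), Vl := (Vl S)(a := X),
                                       Nxt := (Nxt S)(a := Some c, p := Some a)\<rparr>))
     | PC1_6 \<Rightarrow> S' = setpc P PC0 (S\<lparr>Lck := (Lck S)(p := None)\<rparr>)
     | PC2_1 \<Rightarrow> S' = setpc P (PL1 CRem) S
     | PC2_2 \<Rightarrow> Lck S p = None \<and> S' = setpc P PC2_3 (S\<lparr>Lck := (Lck S)(p := Some P)\<rparr>)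
     | PC2_3 \<Rightarrow> (if SC S P then S' = setpc P PC2_4 S
                 else S' = setpc P PC0 (S\<lparr>Lck := (Lck S)(p := None)\<rparr>))
     | PC2_4 \<Rightarrow> (if vless X (Vl S c) then S' = setpc P PC0 (S\<lparr>Lck := (Lck S)(p := None)\<rparr>)
                 else S' = setpc P PC2_5 S)
     | PC2_5 \<Rightarrow> Lck S c = None \<and>
                 (\<exists>b. Nxt S c = Some b \<and>
                   S' = setpc P PC2_6 (S\<lparr>Lck := (Lck S)(c := Some P), dv := (dv S)(P := b)\<rparr>))
     | PC2_6 \<Rightarrow> S' = setpc P PC2_7 (S\<lparr>Mk := insert c (Mk S)\<rparr>)
     | PC2_7 \<Rightarrow> S' = setpc P PC2_8 (S\<lparr>Nxt := (Nxt S)(p := Some (dv S P))\<rparr>)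
     | PC2_8 \<Rightarrow> S' = setpc P PC0 (S\<lparr>Lck := (Lck S)(c := None, p := None)\<rparr>)
     | PC3_1 \<Rightarrow> S' = setpc P PC3_2 (S\<lparr>currv := (currv S)(P := H)\<rparr>)
     | PC3_2 \<Rightarrow> S' = setpc P PC3_3 S
     | PC3_3 \<Rightarrow> (\<exists>b. Nxt S c = Some b \<and> S' = setpc P PC3_4 (S\<lparr>currv := (currv S)(P := b)\<rparr>))
     | PC3_4 \<Rightarrow> S' = setpc P (if vle X (Vl S c) then PC3_5 else PC3_2) S
     | PC3_5 \<Rightarrow> S' = setpc P PC0 S)"

definition initial :: "'a \<Rightarrow> 'a \<Rightarrow> ('a, 'p) state \<Rightarrow> bool" where
  "initial H T S \<longleftrightarrow>
     Act S = {H, T} \<and> Mk S = {} \<and>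
     Nxt S H = Some T \<and> Nxt S T = None \<and> (\<forall>a. a \<notin> {H, T} \<longrightarrow> Nxt S a = Some a) \<and>
     Vl S H = MinusOne \<and> Vl S T = Infty \<and> (\<forall>a. a \<notin> {H, T} \<longrightarrow> Vl S a = Undef) \<and>
     (\<forall>a. Lck S a = None) \<and>
     (\<forall>P. predv S P = H \<and> currv S P = T \<and> pcv S P = PC0)"

text \<open>A history sequence (S 0, e 0, S 1, ..., S n) of length n; every (possibly infinite)
  history sequence is covered through its finite prefixes.\<close>

definition history :: "'a \<Rightarrow> 'a \<Rightarrow> nat \<Rightarrow> (nat \<Rightarrow> ('a, 'p) state) \<Rightarrow> (nat \<Rightarrow> 'p) \<Rightarrow> bool" where
  "history H T n S e \<longleftrightarrow> initial H T (S 0) \<and> (\<forall>i<n. step H (S i) (e i) (S (Suc i)))"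

definition is_path :: "'a \<Rightarrow> ('a, 'p) state \<Rightarrow> 'a list \<Rightarrow> bool" where
  "is_path T S xs \<longleftrightarrow> length xs > 1 \<and> distinct xs \<and>
     (\<forall>i. Suc i < length xs \<longrightarrow> xs ! i \<noteq> T \<and> Nxt S (xs ! i) = Some (xs ! Suc i))"

definition has_path :: "'a \<Rightarrow> ('a, 'p) state \<Rightarrow> 'a \<Rightarrow> 'a \<Rightarrow> bool" where
  "has_path T S a b \<longleftrightarrow> (\<exists>xs. is_path T S xs \<and> hd xs = a \<and> last xs = b)"

definition on_main_branch :: "'a \<Rightarrow> 'a \<Rightarrow> ('a, 'p) state \<Rightarrow> 'a \<Rightarrow> bool" where
  "on_main_branch H T S a \<longleftrightarrow>
     (\<exists>xs. is_path T S xs \<and> hd xs = H \<and> last xs = T \<and> a \<in> set xs)"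

definition NS1 :: "'a \<Rightarrow> 'a \<Rightarrow> ('a, 'p) state \<Rightarrow> bool" where
  "NS1 H T S \<longleftrightarrow>
     H \<in> Act S \<and> T \<in> Act S \<and> Vl S H = MinusOne \<and> Vl S T = Infty \<and>
     (\<forall>a \<in> Act S. a \<noteq> H \<and> a \<noteq> T \<longrightarrow> (\<exists>n. Vl S a = Fin n)) \<and>
     (\<forall>a \<in> Act S. a \<noteq> T \<longrightarrow> (\<exists>b. Nxt S a = Some b \<and> b \<in> Act S \<and> vless (Vl S a) (Vl S b))) \<and>
     (\<forall>P. predv S P \<in> Act S \<and> currv S P \<in> Act S) \<and>
     finite (Act S) \<and>
     \<not> (\<exists>a \<in> Act S. \<exists>b \<in> Act S. has_path T S a b \<and> has_path T S b a)"

definition NS2 :: "'a \<Rightarrow> 'a \<Rightarrow> ('a, 'p) state \<Rightarrow> bool" where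
  "NS2 H T S \<longleftrightarrow> (\<forall>a. a \<in> Act S \<longleftrightarrow> on_main_branch H T S a \<or> a \<in> Mk S)"

definition NS3 :: "('a, 'p) state \<Rightarrow> bool" where
  "NS3 S \<longleftrightarrow> (\<forall>P. let p = predv S P; c = currv S P; X = Fin (xv S P) in
     (\<forall>cl. pcv S P \<in> {PL2 cl, PL31 cl} \<longrightarrow> vless (Vl S c) X) \<and>
     (\<forall>cl. pcv S P = PL32 cl \<longrightarrow> p = c \<and> vless (Vl S p) X) \<and>
     (\<forall>cl. pcv S P = PL4 cl \<longrightarrow> vless (Vl S p) (Vl S c) \<and> vless (Vl S p) X) \<and>
     (\<forall>cl. pcv S P = PL5 cl \<longrightarrow> vless (Vl S p) X \<and> vle X (Vl S c)))"

definition NS4 :: "('a, 'p) state \<Rightarrow> bool" where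
  "NS4 S \<longleftrightarrow> (\<forall>P. let p = predv S P; c = currv S P; X = Fin (xv S P) in
     (pcv S P \<in> {PC1_2, PC1_3, PC1_4} \<longrightarrow> vless (Vl S p) X \<and> vle X (Vl S c)) \<and>
     (pcv S P = PC1_5 \<longrightarrow> vless (Vl S p) X \<and> vless X (Vl S c)) \<and>
     (pcv S P \<in> {PC1_3, PC1_4, PC1_5, PC1_6} \<longrightarrow> Lck S p = Some P) \<and>
     (pcv S P \<in> {PC1_4, PC1_5} \<longrightarrow> p \<notin> Mk S \<and> Nxt S p = Some c))"

definition NS5 :: "('a, 'p) state \<Rightarrow> bool" where
  "NS5 S \<longleftrightarrow> (\<forall>P. let p = predv S P; c = currv S P; X = Fin (xv S P) in
     (pcv S P \<in> {PC2_2, PC2_3, PC2_4} \<longrightarrow> vless (Vl S p) X \<and> vle X (Vl S c)) \<and>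
     (pcv S P \<in> {PC2_5, PC2_6, PC2_7, PC2_8} \<longrightarrow> vless (Vl S p) X \<and> X = Vl S c) \<and>
     (pcv S P \<in> {PC2_3, PC2_4, PC2_5, PC2_6, PC2_7, PC2_8} \<longrightarrow> Lck S p = Some P) \<and>
     (pcv S P \<in> {PC2_6, PC2_7, PC2_8} \<longrightarrow> Lck S c = Some P) \<and>
     (pcv S P \<in> {PC2_4, PC2_5, PC2_6, PC2_7, PC2_8} \<longrightarrow> p \<notin> Mk S) \<and>
     (pcv S P \<in> {PC2_4, PC2_5, PC2_6, PC2_7} \<longrightarrow> Nxt S p = Some c) \<and>
     (pcv S P = PC2_7 \<longrightarrow> c \<in> Mk S))"

definition normal :: "'a \<Rightarrow> 'a \<Rightarrow> ('a, 'p) state \<Rightarrow> bool" where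
  "normal H T S \<longleftrightarrow> NS1 H T S \<and> NS2 H T S \<and> NS3 S \<and> NS4 S \<and> NS5 S"

end

theory Submission
  imports Defs
begin

(* The theorem follows from a stronger inductive invariant lazy_inv. The active cells are
   sorted: every active cell other than T has an active successor of strictly larger value.
   Hence values increase along paths, so there are no cycles. The main branch is the unique
   Next-chain L from H to T, and Active = set L \<union> Marked. Finally, every process satisfies an
   assertion attached to its current line, which contains NS3-NS5. A step changes Next only at
   a cell the stepping process has locked (linking in a fresh cell at 1.5, unlinking at 2.7),
   marks only a locked cell (2.6), and never changes the value of an active cell. This is why
   the assertions of the other processes survive the step. *)

lemma vless_irrefl [simp]: "\<not> vless v v"
  by (cases v) auto

lemma vless_trans: "vless u v \<Longrightarrow> vless v w \<Longrightarrow> vless u w"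
  by (cases u; cases v; cases w) auto

lemma vless_asym: "vless u v \<Longrightarrow> \<not> vless v u"
  by (cases u; cases v) auto

lemma vless_linear: "u \<noteq> Undef \<Longrightarrow> v \<noteq> Undef \<Longrightarrow> vless u v \<or> u = v \<or> vless v u"
  by (cases u; cases v) auto

fun linked :: "'a \<Rightarrow> ('a \<Rightarrow> 'a option) \<Rightarrow> 'a list \<Rightarrow> bool" where
  "linked T N (x # y # zs) \<longleftrightarrow> x \<noteq> T \<and> N x = Some y \<and> linked T N (y # zs)"
| "linked T N _ \<longleftrightarrow> True"

lemma linked_iff_nth:
  "linked T N xs \<longleftrightarrow> (\<forall>i. Suc i < length xs \<longrightarrow> xs ! i \<noteq> T \<and> N (xs ! i) = Some (xs ! Suc i))"
  by (induction T N xs rule: linked.induct) (auto simp: All_less_Suc2)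

lemma is_path_iff_linked: "is_path T S xs \<longleftrightarrow> 1 < length xs \<and> distinct xs \<and> linked T (Nxt S) xs"
  by (simp add: is_path_def linked_iff_nth)

lemma linked_append: "linked T N (xs @ y # ys) \<longleftrightarrow> linked T N (xs @ [y]) \<and> linked T N (y # ys)"
  by (induction xs rule: induct_list012) auto

lemma linked_fun_upd: "q \<notin> set xs \<Longrightarrow> linked T (N(q := v)) xs \<longleftrightarrow> linked T N xs"
  by (induction T N xs rule: linked.induct) auto

lemma linked_fun_upd_snoc:
  "q \<notin> set xs \<Longrightarrow> linked T (N(q := v)) (xs @ [q]) \<longleftrightarrow> linked T N (xs @ [q])"
  by (induction xs rule: induct_list012) auto

lemma linked_to_end_unique:
  "linked T N xs \<Longrightarrow> linked T N ys \<Longrightarrow> xs \<noteq> [] \<Longrightarrow> ys \<noteq> [] \<Longrightarrow> hd xs = hd ys \<Longrightarrow>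
   last xs = T \<Longrightarrow> last ys = T \<Longrightarrow> xs = ys"
proof (induction xs arbitrary: ys rule: induct_list012)
  case (2 x)
  then show ?case by (cases ys rule: remdups_adj.cases) auto
next
  case (3 x y zs)
  then obtain y' zs' where ys: "ys = x # y' # zs'"
    by (cases ys rule: remdups_adj.cases) auto
  with 3 have "y' = y" by simp
  have "y # zs = y' # zs'"
    by (rule "3.IH"(2)) (use 3 ys \<open>y' = y\<close> in simp_all)
  with ys show ?case by simp
qed simp

lemma linked_vless:
  assumes "linked T N xs" "hd xs \<in> A" "1 < length xs"
    and closed: "\<And>a. a \<in> A \<Longrightarrow> a \<noteq> T \<Longrightarrow> \<exists>b. N a = Some b \<and> b \<in> A \<and> vless (V a) (V b)"
  shows "vless (V (hd xs)) (V (last xs)) \<and> last xs \<in> A"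
  using assms(1-3)
proof (induction xs rule: induct_list012)
  case (3 x y zs)
  then have y: "y \<in> A" "vless (V x) (V y)"
    using closed[of x] by auto
  show ?case
  proof (cases zs)
    case Nil
    with y show ?thesis by simp
  next
    case Cons
    with 3 y have "vless (V y) (V (last zs)) \<and> last zs \<in> A" by simp
    with y Cons show ?thesis by (auto intro: vless_trans)
  qed
qed auto

lemma linked_split_at:
  assumes "linked T N L" "last L = T" "p \<in> set L" "p \<noteq> T" "N p = Some c"
  obtains xs ys where "L = xs @ p # c # ys"
proof -
  obtain xs ys where L: "L = xs @ p # ys"
    using split_list[OF assms(3)] by blast
  with assms(2,4) obtain y ys' where ys: "ys = y # ys'"
    by (cases ys) auto
  with assms(1) L have "linked T N (p # y # ys')"
    using linked_append by metis
  with assms(5) have "y = c" by simp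
  with L ys show thesis using that by blast
qed

lemma linked_insert:
  assumes "linked T N (xs @ p # c # ys)" "distinct (xs @ p # c # ys)"
    and "a \<notin> set (xs @ p # c # ys)" "a \<noteq> T"
  shows "linked T (N(a := Some c, p := Some a)) (xs @ p # a # c # ys)"
proof -
  have "linked T N (xs @ [p])" "linked T N (p # c # ys)"
    using assms(1) linked_append by metis+
  with assms(2-4) show ?thesis
    by (subst linked_append) (simp add: linked_fun_upd linked_fun_upd_snoc)
qed

lemma linked_unlink:
  assumes "linked T N (xs @ p # c # d # ys)" "distinct (xs @ p # c # d # ys)"
  shows "linked T (N(p := Some d)) (xs @ p # d # ys)"
proof -
  have "linked T N (xs @ [p])" "linked T N (p # c # d # ys)"
    using assms(1) linked_append by metis+
  with assms(2) show ?thesis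
    by (subst linked_append) (simp add: linked_fun_upd linked_fun_upd_snoc)
qed

definition sorted_heap :: "'a \<Rightarrow> 'a \<Rightarrow> ('a, 'p) state \<Rightarrow> bool" where
  "sorted_heap H T S \<longleftrightarrow>
     H \<in> Act S \<and> T \<in> Act S \<and> Vl S H = MinusOne \<and> Vl S T = Infty \<and>
     (\<forall>a \<in> Act S. a \<noteq> H \<and> a \<noteq> T \<longrightarrow> (\<exists>n. Vl S a = Fin n)) \<and>
     (\<forall>a \<in> Act S. a \<noteq> T \<longrightarrow> (\<exists>b. Nxt S a = Some b \<and> b \<in> Act S \<and> vless (Vl S a) (Vl S b))) \<and>
     finite (Act S)"

definition locals_active :: "('a, 'p) state \<Rightarrow> bool" where
  "locals_active S \<longleftrightarrow> (\<forall>P. predv S P \<in> Act S \<and> currv S P \<in> Act S)"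

definition main_list :: "'a \<Rightarrow> 'a \<Rightarrow> ('a, 'p) state \<Rightarrow> 'a list \<Rightarrow> bool" where
  "main_list H T S L \<longleftrightarrow>
     1 < length L \<and> distinct L \<and> linked T (Nxt S) L \<and> hd L = H \<and> last L = T"

definition branch_inv :: "'a \<Rightarrow> 'a \<Rightarrow> ('a, 'p) state \<Rightarrow> bool" where
  "branch_inv H T S \<longleftrightarrow> (\<exists>L. main_list H T S L \<and> Act S = set L \<union> Mk S)"

(* Besides NS3-NS5, the assertion records Next(curr) = d at 2.6-2.7 (needed for the
   unlinking at 2.7) and Val(curr) < x at 3.2-3.3 (so that curr is not T at 3.3). *)
definition line_assertion :: "('a, 'p) state \<Rightarrow> 'p \<Rightarrow> bool" where
  "line_assertion S P \<longleftrightarrow> (let p = predv S P; c = currv S P; X = Fin (xv S P) in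
     case pcv S P of
       PL2 _ \<Rightarrow> vless (Vl S c) X
     | PL31 _ \<Rightarrow> vless (Vl S c) X
     | PL32 _ \<Rightarrow> p = c \<and> vless (Vl S c) X
     | PL4 _ \<Rightarrow> vless (Vl S p) (Vl S c) \<and> vless (Vl S p) X
     | PL5 _ \<Rightarrow> vless (Vl S p) X \<and> vle X (Vl S c)
     | PC1_2 \<Rightarrow> vless (Vl S p) X \<and> vle X (Vl S c)
     | PC1_3 \<Rightarrow> vless (Vl S p) X \<and> vle X (Vl S c) \<and> Lck S p = Some P
     | PC1_4 \<Rightarrow> vless (Vl S p) X \<and> vle X (Vl S c) \<and> Lck S p = Some P \<and>
                p \<notin> Mk S \<and> Nxt S p = Some c
     | PC1_5 \<Rightarrow> vless (Vl S p) X \<and> vless X (Vl S c) \<and> Lck S p = Some P \<and>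
                p \<notin> Mk S \<and> Nxt S p = Some c
     | PC1_6 \<Rightarrow> Lck S p = Some P
     | PC2_2 \<Rightarrow> vless (Vl S p) X \<and> vle X (Vl S c)
     | PC2_3 \<Rightarrow> vless (Vl S p) X \<and> vle X (Vl S c) \<and> Lck S p = Some P
     | PC2_4 \<Rightarrow> vless (Vl S p) X \<and> vle X (Vl S c) \<and> Lck S p = Some P \<and>
                p \<notin> Mk S \<and> Nxt S p = Some c
     | PC2_5 \<Rightarrow> vless (Vl S p) X \<and> Vl S c = X \<and> Lck S p = Some P \<and>
                p \<notin> Mk S \<and> Nxt S p = Some c
     | PC2_6 \<Rightarrow> vless (Vl S p) X \<and> Vl S c = X \<and> Lck S p = Some P \<and> Lck S c = Some P \<and>
                p \<notin> Mk S \<and> Nxt S p = Some c \<and> Nxt S c = Some (dv S P)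
     | PC2_7 \<Rightarrow> vless (Vl S p) X \<and> Vl S c = X \<and> Lck S p = Some P \<and> Lck S c = Some P \<and>
                p \<notin> Mk S \<and> Nxt S p = Some c \<and> c \<in> Mk S \<and> Nxt S c = Some (dv S P)
     | PC2_8 \<Rightarrow> vless (Vl S p) X \<and> Vl S c = X \<and> Lck S p = Some P \<and> Lck S c = Some P \<and>
                p \<notin> Mk S
     | PC3_2 \<Rightarrow> vless (Vl S c) X
     | PC3_3 \<Rightarrow> vless (Vl S c) X
     | _ \<Rightarrow> True)"

definition lazy_inv :: "'a \<Rightarrow> 'a \<Rightarrow> ('a, 'p) state \<Rightarrow> bool" where
  "lazy_inv H T S \<longleftrightarrow>
     sorted_heap H T S \<and> locals_active S \<and> branch_inv H T S \<and> (\<forall>P. line_assertion S P)"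

lemma sorted_heap_Vl_not_Undef:
  "sorted_heap H T S \<Longrightarrow> a \<in> Act S \<Longrightarrow> Vl S a \<noteq> Undef"
  unfolding sorted_heap_def by (cases "a = H \<or> a = T") auto

lemma sorted_heap_Nxt:
  "sorted_heap H T S \<Longrightarrow> a \<in> Act S \<Longrightarrow> a \<noteq> T \<Longrightarrow> Nxt S a = Some b \<Longrightarrow>
   b \<in> Act S \<and> vless (Vl S a) (Vl S b)"
  unfolding sorted_heap_def by force

lemma has_path_vless:
  assumes "sorted_heap H T S" "a \<in> Act S" "has_path T S a b"
  shows "vless (Vl S a) (Vl S b)"
proof -
  obtain xs where "is_path T S xs" "hd xs = a" "last xs = b"
    using assms(3) by (auto simp: has_path_def)
  with assms(1,2) show ?thesis
    using linked_vless[of T "Nxt S" xs "Act S" "Vl S"]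
    by (auto simp: is_path_iff_linked sorted_heap_def)
qed

lemma sorted_heap_NS1:
  assumes "sorted_heap H T S" "locals_active S"
  shows "NS1 H T S"
proof -
  have "\<not> (\<exists>a \<in> Act S. \<exists>b \<in> Act S. has_path T S a b \<and> has_path T S b a)"
    using has_path_vless[OF assms(1)] vless_asym by blast
  with assms show ?thesis
    unfolding NS1_def sorted_heap_def locals_active_def by blast
qed

lemma on_main_branch_iff: "on_main_branch H T S a \<longleftrightarrow> (\<exists>L. main_list H T S L \<and> a \<in> set L)"
  unfolding on_main_branch_def main_list_def is_path_iff_linked by blast

lemma main_list_unique: "main_list H T S L \<Longrightarrow> main_list H T S L' \<Longrightarrow> L = L'"
  unfolding main_list_def by (auto intro: linked_to_end_unique)

lemma branch_inv_NS2:
  assumes "branch_inv H T S"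
  shows "NS2 H T S"
proof -
  obtain L where L: "main_list H T S L" "Act S = set L \<union> Mk S"
    using assms unfolding branch_inv_def by blast
  have "on_main_branch H T S a \<longleftrightarrow> a \<in> set L" for a
    using main_list_unique[OF L(1)] L(1) unfolding on_main_branch_iff by blast
  with L(2) show ?thesis
    unfolding NS2_def by blast
qed

lemma line_assertions_NS345:
  assumes "\<forall>P. line_assertion S P"
  shows "NS3 S" "NS4 S" "NS5 S"
  unfolding NS3_def NS4_def NS5_def
  by (rule all_forward[OF assms], simp add: line_assertion_def Let_def split: pc.split_asm)+

lemma lazy_inv_normal:
  assumes "lazy_inv H T S"
  shows "normal H T S"
proof -
  have "sorted_heap H T S" "locals_active S" "branch_inv H T S" "\<forall>P. line_assertion S P"
    using assms unfolding lazy_inv_def by blast+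
  then show ?thesis
    unfolding normal_def by (simp add: sorted_heap_NS1 branch_inv_NS2 line_assertions_NS345)
qed

lemma lazy_inv_initial:
  assumes "H \<noteq> T" "initial H T S"
  shows "lazy_inv H T S"
proof -
  have init: "Act S = {H, T}" "Mk S = {}" "Nxt S H = Some T" "Vl S H = MinusOne" "Vl S T = Infty"
    "\<And>P. predv S P = H" "\<And>P. currv S P = T" "\<And>P. pcv S P = PC0"
    using assms(2) unfolding initial_def by auto
  have "main_list H T S [H, T]"
    using assms(1) init by (simp add: main_list_def)
  then have "branch_inv H T S"
    using init unfolding branch_inv_def by auto
  moreover have "sorted_heap H T S"
    using assms(1) init unfolding sorted_heap_def by auto
  moreover have "locals_active S"
    using init unfolding locals_active_def by auto
  moreover have "line_assertion S P" for P
    using init by (simp add: line_assertion_def)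
  ultimately show ?thesis
    unfolding lazy_inv_def by blast
qed

lemma step_shared_unchanged:
  assumes "step H S Q S'" "pcv S Q \<notin> {PC1_5, PC2_6, PC2_7}"
  shows "Act S' = Act S \<and> Vl S' = Vl S \<and> Nxt S' = Nxt S \<and> Mk S' = Mk S"
  using assms by (cases "pcv S Q") (auto simp: step_def Let_def setpc_def split: if_splits)

lemma step_cases_shared [case_names unchanged insert mark unlink]:
  assumes "step H S Q S'"
  obtains "Act S' = Act S" "Vl S' = Vl S" "Nxt S' = Nxt S" "Mk S' = Mk S"
  | a where "pcv S Q = PC1_5" "a \<notin> Act S"
      "S' = setpc Q PC1_6 (S\<lparr>Act := insert a (Act S), Vl := (Vl S)(a := Fin (xv S Q)),
                              Nxt := (Nxt S)(a := Some (currv S Q), predv S Q := Some a)\<rparr>)"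
  | "pcv S Q = PC2_6" "S' = setpc Q PC2_7 (S\<lparr>Mk := insert (currv S Q) (Mk S)\<rparr>)"
  | "pcv S Q = PC2_7" "S' = setpc Q PC2_8 (S\<lparr>Nxt := (Nxt S)(predv S Q := Some (dv S Q))\<rparr>)"
proof -
  consider "pcv S Q \<notin> {PC1_5, PC2_6, PC2_7}" | "pcv S Q = PC1_5" | "pcv S Q = PC2_6" | "pcv S Q = PC2_7"
    by blast
  then show thesis
  proof cases
    case 1
    then show thesis using that(1) step_shared_unchanged[OF assms] by blast
  next
    case 2
    then show thesis using that(2) assms unfolding step_def Let_def by auto
  next
    case 3
    then show thesis using that(3) assms unfolding step_def Let_def by auto
  next
    case 4
    then show thesis using that(4) assms unfolding step_def Let_def by auto
  qed
qed

lemma step_Act_mono: "step H S Q S' \<Longrightarrow> Act S \<subseteq> Act S'"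
  by (cases rule: step_cases_shared) (auto simp: setpc_def)

lemma sorted_heap_setpc [simp]: "sorted_heap H T (setpc Q l S) \<longleftrightarrow> sorted_heap H T S"
  by (simp add: sorted_heap_def setpc_def)

lemma branch_inv_setpc [simp]: "branch_inv H T (setpc Q l S) \<longleftrightarrow> branch_inv H T S"
  by (simp add: branch_inv_def main_list_def setpc_def)

lemma sorted_heap_insert:
  assumes heap: "sorted_heap H T S" and a: "a \<notin> Act S" and p: "p \<in> Act S" "Nxt S p = Some c"
    and between: "vless (Vl S p) (Fin n)" "vless (Fin n) (Vl S c)"
  shows "sorted_heap H T (S\<lparr>Act := insert a (Act S), Vl := (Vl S)(a := Fin n),
                           Nxt := (Nxt S)(a := Some c, p := Some a)\<rparr>)"
    (is "sorted_heap H T ?S")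
proof -
  have HT: "H \<in> Act S" "T \<in> Act S" "Vl S H = MinusOne" "Vl S T = Infty"
    using heap unfolding sorted_heap_def by blast+
  then have "p \<noteq> T"
    using between(1) by auto
  then have c: "c \<in> Act S"
    using sorted_heap_Nxt[OF heap p(1) _ p(2)] by blast
  have succ: "\<exists>b. Nxt ?S x = Some b \<and> b \<in> Act ?S \<and> vless (Vl ?S x) (Vl ?S b)"
    if x: "x \<in> Act ?S" "x \<noteq> T" for x
  proof -
    consider "x = a" | "x = p" | "x \<in> Act S" "x \<noteq> a" "x \<noteq> p"
      using x by auto
    then show ?thesis
    proof cases
      case 1
      with a p c between show ?thesis by auto
    next
      case 2
      with a p between show ?thesis by auto
    next
      case 3
      with heap x obtain b where "Nxt S x = Some b" "b \<in> Act S" "vless (Vl S x) (Vl S b)"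
        unfolding sorted_heap_def by blast
      with a 3 show ?thesis by auto
    qed
  qed
  have fin: "\<exists>m. Vl ?S x = Fin m" if "x \<in> Act ?S" "x \<noteq> H" "x \<noteq> T" for x
    using heap that unfolding sorted_heap_def by (cases "x = a") auto
  have "H \<in> Act ?S" "T \<in> Act ?S" "Vl ?S H = MinusOne" "Vl ?S T = Infty" "finite (Act ?S)"
    using heap HT a by (auto simp: sorted_heap_def)
  with succ fin show ?thesis
    unfolding sorted_heap_def by blast
qed

lemma sorted_heap_unlink:
  assumes heap: "sorted_heap H T S" and "p \<in> Act S" "c \<in> Act S" "c \<noteq> T" "Nxt S c = Some d"
    and "vless (Vl S p) (Vl S c)"
  shows "sorted_heap H T (S\<lparr>Nxt := (Nxt S)(p := Some d)\<rparr>)"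
proof -
  have "d \<in> Act S" "vless (Vl S p) (Vl S d)"
    using sorted_heap_Nxt[OF heap] assms vless_trans by blast+
  with heap show ?thesis
    unfolding sorted_heap_def by auto
qed

lemma branch_inv_mark:
  assumes "branch_inv H T S" "c \<in> Act S"
  shows "branch_inv H T (S\<lparr>Mk := insert c (Mk S)\<rparr>)"
  using assms unfolding branch_inv_def main_list_def by auto

lemma branch_inv_insert:
  assumes inv: "branch_inv H T S" and a: "a \<notin> Act S"
    and p: "p \<in> Act S" "p \<notin> Mk S" "p \<noteq> T" "Nxt S p = Some c"
  shows "branch_inv H T (S\<lparr>Act := insert a (Act S), Vl := V, Nxt := (Nxt S)(a := Some c, p := Some a)\<rparr>)"
proof -
  obtain L where L: "main_list H T S L" "Act S = set L \<union> Mk S"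
    using inv unfolding branch_inv_def by blast
  then have "T \<in> set L"
    unfolding main_list_def by (metis last_in_set list.size(3) not_less0)
  with L p a have "p \<in> set L" "a \<notin> set L" "a \<noteq> T"
    by auto
  with L p obtain xs ys where xs: "L = xs @ p # c # ys"
    unfolding main_list_def by (metis linked_split_at)
  let ?L' = "xs @ p # a # c # ys"
  have "main_list H T (S\<lparr>Act := insert a (Act S), Vl := V, Nxt := (Nxt S)(a := Some c, p := Some a)\<rparr>) ?L'"
    using L(1) linked_insert[of T "Nxt S" xs p c ys a] \<open>a \<notin> set L\<close> \<open>a \<noteq> T\<close>
    unfolding main_list_def xs by (cases xs) auto
  moreover have "insert a (Act S) = set ?L' \<union> Mk S"
    using L(2) unfolding xs by auto
  ultimately show ?thesis
    unfolding branch_inv_def by auto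
qed

lemma branch_inv_unlink:
  assumes inv: "branch_inv H T S"
    and p: "p \<in> Act S" "p \<notin> Mk S" "p \<noteq> T" "Nxt S p = Some c"
    and c: "c \<in> Mk S" "c \<noteq> T" "Nxt S c = Some d"
  shows "branch_inv H T (S\<lparr>Nxt := (Nxt S)(p := Some d)\<rparr>)"
proof -
  obtain L where L: "main_list H T S L" "Act S = set L \<union> Mk S"
    using inv unfolding branch_inv_def by blast
  with p have "p \<in> set L"
    by auto
  with L p obtain xs ys where xs: "L = xs @ p # c # ys"
    unfolding main_list_def by (metis linked_split_at)
  with L(1) c(2) obtain y ys' where ys: "ys = y # ys'"
    unfolding main_list_def by (cases ys) auto
  with L(1) have "linked T (Nxt S) (c # y # ys')"
    unfolding main_list_def xs using linked_append[of T "Nxt S" "xs @ [p]" c "y # ys'"] by simp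
  with c(3) have "y = d"
    by simp
  let ?L' = "xs @ p # d # ys'"
  have "main_list H T (S\<lparr>Nxt := (Nxt S)(p := Some d)\<rparr>) ?L'"
    using L(1) linked_unlink[of T "Nxt S" xs p c d ys']
    unfolding main_list_def xs ys \<open>y = d\<close> by (cases xs) auto
  moreover have "Act S = set ?L' \<union> Mk S"
    using L(2) c(1) unfolding xs ys \<open>y = d\<close> by auto
  ultimately show ?thesis
    unfolding branch_inv_def by auto
qed

lemma line_assertion_PC1_5:
  assumes "line_assertion S Q" "pcv S Q = PC1_5"
  shows "vless (Vl S (predv S Q)) (Fin (xv S Q))" "vless (Fin (xv S Q)) (Vl S (currv S Q))"
    "predv S Q \<notin> Mk S" "Nxt S (predv S Q) = Some (currv S Q)"
  using assms by (auto simp: line_assertion_def Let_def)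

lemma line_assertion_PC2_7:
  assumes "line_assertion S Q" "pcv S Q = PC2_7"
  shows "vless (Vl S (predv S Q)) (Fin (xv S Q))" "Vl S (currv S Q) = Fin (xv S Q)"
    "predv S Q \<notin> Mk S" "Nxt S (predv S Q) = Some (currv S Q)"
    "currv S Q \<in> Mk S" "Nxt S (currv S Q) = Some (dv S Q)"
  using assms by (auto simp: line_assertion_def Let_def)

lemma sorted_heap_step:
  assumes heap: "sorted_heap H T S" and act: "locals_active S" and la: "line_assertion S Q"
    and st: "step H S Q S'"
  shows "sorted_heap H T S'"
  using st
proof (cases rule: step_cases_shared)
  case unchanged
  with heap show ?thesis
    unfolding sorted_heap_def by simp
next
  case (insert a)
  with act show ?thesis
    using line_assertion_PC1_5[OF la] sorted_heap_insert[OF heap]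
    by (simp add: locals_active_def)
next
  case mark
  with heap show ?thesis
    by (simp add: sorted_heap_def setpc_def)
next
  case unlink
  note facts = line_assertion_PC2_7[OF la unlink(1)]
  have "currv S Q \<noteq> T"
    using heap facts(2) by (auto simp: sorted_heap_def)
  with unlink act facts show ?thesis
    using sorted_heap_unlink[OF heap, of "predv S Q" "currv S Q" "dv S Q"]
    by (simp add: locals_active_def)
qed

lemma branch_inv_step:
  assumes heap: "sorted_heap H T S" and act: "locals_active S" and la: "line_assertion S Q"
    and inv: "branch_inv H T S" and st: "step H S Q S'"
  shows "branch_inv H T S'"
  using st
proof (cases rule: step_cases_shared)
  case unchanged
  with inv show ?thesis
    unfolding branch_inv_def main_list_def by simp
next
  case (insert a)
  note facts = line_assertion_PC1_5[OF la insert(1)]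
  have "predv S Q \<noteq> T"
    using heap facts(1) by (auto simp: sorted_heap_def)
  with insert act facts show ?thesis
    using branch_inv_insert[OF inv] by (simp add: locals_active_def)
next
  case mark
  with act show ?thesis
    using branch_inv_mark[OF inv] by (simp add: locals_active_def)
next
  case unlink
  note facts = line_assertion_PC2_7[OF la unlink(1)]
  have "predv S Q \<noteq> T" "currv S Q \<noteq> T"
    using heap facts(1,2) by (auto simp: sorted_heap_def)
  with unlink act facts show ?thesis
    using branch_inv_unlink[OF inv] by (simp add: locals_active_def)
qed

lemma step_locals_active:
  assumes heap: "sorted_heap H T S" and act: "locals_active S" and la: "line_assertion S Q"
    and st: "step H S Q S'"
  shows "predv S' P \<in> Act S" "currv S' P \<in> Act S"
proof -
  have succ_active: "b \<in> Act S" if "currv S Q \<noteq> T" "Nxt S (currv S Q) = Some b"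
    using sorted_heap_Nxt[OF heap] act that unfolding locals_active_def by blast
  have "currv S Q \<noteq> T" if "pcv S Q = PC3_3 \<or> (\<exists>cl. pcv S Q = PL32 cl)"
    using that la heap
    by (auto simp: line_assertion_def Let_def sorted_heap_def)
  with st act succ_active heap have "predv S' P \<in> Act S \<and> currv S' P \<in> Act S"
    by (cases "pcv S Q") (auto simp: step_def Let_def setpc_def locals_active_def sorted_heap_def
        split: if_splits)
  then show "predv S' P \<in> Act S" "currv S' P \<in> Act S" by blast+
qed

lemma locals_active_step:
  assumes "sorted_heap H T S" "locals_active S" "line_assertion S Q" "step H S Q S'"
  shows "locals_active S'"
  using step_locals_active[OF assms] step_Act_mono[OF assms(4)]
  unfolding locals_active_def by blast

definition view_preserved :: "('a, 'p) state \<Rightarrow> ('a, 'p) state \<Rightarrow> 'p \<Rightarrow> bool" where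
  "view_preserved S S' P \<longleftrightarrow>
     pcv S' P = pcv S P \<and> predv S' P = predv S P \<and> currv S' P = currv S P \<and>
     xv S' P = xv S P \<and> dv S' P = dv S P \<and>
     Vl S' (predv S P) = Vl S (predv S P) \<and> Vl S' (currv S P) = Vl S (currv S P) \<and>
     (Lck S (predv S P) = Some P \<longrightarrow> Lck S' (predv S P) = Some P \<and>
        Nxt S' (predv S P) = Nxt S (predv S P) \<and> (predv S P \<notin> Mk S \<longrightarrow> predv S P \<notin> Mk S')) \<and>
     (Lck S (currv S P) = Some P \<longrightarrow> Lck S' (currv S P) = Some P \<and>
        Nxt S' (currv S P) = Nxt S (currv S P)) \<and>
     Mk S \<subseteq> Mk S'"

lemma line_assertion_view_preserved:
  assumes "line_assertion S P" "view_preserved S S' P"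
  shows "line_assertion S' P"
  using assms by (cases "pcv S P") (auto simp: line_assertion_def Let_def view_preserved_def)

lemma step_view_preserved:
  assumes act: "locals_active S" and la: "line_assertion S Q" and st: "step H S Q S'"
    and "P \<noteq> Q"
  shows "view_preserved S S' P"
proof -
  have locked_pred: "Lck S (predv S Q) = Some Q"
    if "pcv S Q \<in> {PC1_3, PC1_4, PC1_5, PC1_6, PC2_3, PC2_4, PC2_5, PC2_6, PC2_7, PC2_8}"
    using la that by (auto simp: line_assertion_def Let_def)
  have locked_curr: "Lck S (currv S Q) = Some Q" if "pcv S Q \<in> {PC2_6, PC2_7, PC2_8}"
    using la that by (auto simp: line_assertion_def Let_def)
  show ?thesis
    using st act \<open>P \<noteq> Q\<close> locked_pred locked_curr unfolding locals_active_def
    by (cases "pcv S Q") (auto simp: step_def Let_def setpc_def view_preserved_def split: if_splits)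
qed

lemma line_assertion_own_step:
  assumes heap: "sorted_heap H T S" and act: "locals_active S" and la: "line_assertion S Q"
    and st: "step H S Q S'"
  shows "line_assertion S' Q"
proof -
  have defined: "Vl S (currv S Q) \<noteq> Undef"
    using act sorted_heap_Vl_not_Undef[OF heap] by (auto simp: locals_active_def)
  have succ: "vless (Vl S (currv S Q)) (Vl S b)"
    if "currv S Q \<noteq> T" "Nxt S (currv S Q) = Some b" for b
    using act sorted_heap_Nxt[OF heap] that by (auto simp: locals_active_def)
  have curr_not_T: "currv S Q \<noteq> T" if "vless (Vl S (currv S Q)) (Fin (xv S Q))"
    using heap that by (auto simp: sorted_heap_def)
  have head: "Vl S H = MinusOne"
    using heap by (simp add: sorted_heap_def)
  have cmp: "vless (Vl S (currv S Q)) (Fin (xv S Q))"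
    if "\<not> vless (Fin (xv S Q)) (Vl S (currv S Q))" "Fin (xv S Q) \<noteq> Vl S (currv S Q)"
    using vless_linear[OF _ defined, of "Fin (xv S Q)"] that by auto
  show ?thesis
    using st la defined succ curr_not_T head cmp
    by (cases "pcv S Q")
      (auto simp: step_def Let_def SC_def setpc_def line_assertion_def vle_def
        split: if_splits caller.splits)
qed

lemma lazy_inv_step:
  assumes inv: "lazy_inv H T S" and st: "step H S Q S'"
  shows "lazy_inv H T S'"
proof -
  have heap: "sorted_heap H T S" and act: "locals_active S" and branch: "branch_inv H T S"
    and la: "\<And>P. line_assertion S P"
    using inv unfolding lazy_inv_def by blast+
  have "line_assertion S' P" for P
  proof (cases "P = Q")
    case True
    with line_assertion_own_step[OF heap act la st] show ?thesis by simp
  next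
    case False
    with line_assertion_view_preserved[OF la step_view_preserved[OF act la st]] show ?thesis
      by simp
  qed
  with sorted_heap_step[OF heap act la st] locals_active_step[OF heap act la st]
    branch_inv_step[OF heap act la branch st]
  show ?thesis
    unfolding lazy_inv_def by blast
qed

theorem theorem5p9:
  fixes H T :: 'a and n :: nat
    and S :: "nat \<Rightarrow> ('a, 'p) state" and e :: "nat \<Rightarrow> 'p"
  assumes "H \<noteq> T"
    and "infinite (UNIV :: 'a set)" and "countable (UNIV :: 'a set)"
    and "history H T n S e"
  shows "\<forall>i \<le> n. normal H T (S i)"
proof -
  (* The hypotheses on the address space only make sure that line 1.5 can always find a
     fresh address; safety does not depend on them. *)
  have "lazy_inv H T (S i)" if "i \<le> n" for i
    using that
  proof (induction i)
    case 0
    from assms(1,4) show ?case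
      unfolding history_def by (simp add: lazy_inv_initial)
  next
    case (Suc i)
    then have "lazy_inv H T (S i)"
      by simp
    moreover have "step H (S i) (e i) (S (Suc i))"
      using assms(4) Suc.prems unfolding history_def by simp
    ultimately show ?case
      by (rule lazy_inv_step)
  qed
  then show ?thesis
    by (simp add: lazy_inv_normal)
qed

end
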